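(* Let $\mathbf{p}=(p^{(1)},\dots,p^{(n)})\in(0,1)^n$ with $\sum_i p^{(i)}=1$, and for distinct $i,j\in[n]$ let $f(C^{(i)},C^{(j)})=p^{(i)}/(p^{(i)}+p^{(j)})$. Let $\mathcal{C}=(c_1,\dots,c_\ell)$ be a cycle of $\ell\ge 3$ pairwise distinct indices in $[n]$. Then the situational curl $$\mathrm{curl}(\mathcal{C})=f(C^{(c_\ell)},C^{(c_1)})+\sum_{i=1}^{\ell-1}f(C^{(c_i)},C^{(c_{i+1})})$$ satisfies $1<\mathrm{curl}(\mathcal{C})<\ell-1$.
   Context: $C^{(1)},\dots,C^{(n)}$ are class labels; $\mathbf{p}$ is the categorical distribution of the label for a fixed input state $u$, and $f$ are the corresponding situational pairwise opinions. *)

theory Defs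
  imports Complex_Main
begin

definition opinion :: "(nat \<Rightarrow> real) \<Rightarrow> nat \<Rightarrow> nat \<Rightarrow> real" where
  "opinion p i j = p i / (p i + p j)"

definition curl :: "(nat \<Rightarrow> real) \<Rightarrow> nat list \<Rightarrow> real" where
  "curl p c = opinion p (c ! (length c - 1)) (c ! 0)
     + (\<Sum>i<length c - 1. opinion p (c ! i) (c ! (i + 1)))"

end

theory Submission
  imports Defs
begin

text \<open>Write \<open>x\<^sub>i\<close> for the weight of the \<open>i\<close>-th vertex of the cycle and \<open>S\<close> for
  the total weight of the cycle. Since the cycle has at least three vertices, any two consecutive
  weights add up to less than \<open>S\<close>, so each summand satisfies
  \<open>x\<^sub>i / S < x\<^sub>i / (x\<^sub>i + x\<^sub>i\<^sub>+\<^sub>1) < 1 - x\<^sub>i\<^sub>+\<^sub>1 / S\<close>.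
  Summing around the cycle, the lower bounds add up to \<open>1\<close> and the upper bounds to \<open>\<ell> - 1\<close>.\<close>

lemma sum_lessThan_rotate:
  fixes g :: "nat \<Rightarrow> 'a::comm_monoid_add"
  shows "(\<Sum>i<m. g ((i + 1) mod m)) = (\<Sum>i<m. g i)"
proof (cases m)
  case (Suc k)
  have "(\<Sum>i<Suc k. g ((i + 1) mod Suc k)) = (\<Sum>i<k. g ((i + 1) mod Suc k)) + g 0"
    by simp
  also have "(\<Sum>i<k. g ((i + 1) mod Suc k)) = (\<Sum>i<k. g (Suc i))"
    by (rule sum.cong) auto
  finally show ?thesis
    using Suc by (metis add.commute sum.lessThan_Suc_shift)
qed simp

lemma cyclic_successors_distinct:
  fixes l i :: nat
  assumes "3 \<le> l" and "i < l"
  shows "i \<noteq> (i + 1) mod l" and "i \<noteq> (i + 2) mod l" and "(i + 1) mod l \<noteq> (i + 2) mod l"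
proof -
  consider "i + 2 < l" | "i + 2 = l" | "i + 1 = l"
    using assms(2) by linarith
  then have "i \<noteq> (i + 1) mod l \<and> i \<noteq> (i + 2) mod l \<and> (i + 1) mod l \<noteq> (i + 2) mod l"
    by cases (use assms(1) in \<open>auto simp: mod_Suc\<close>)
  then show "i \<noteq> (i + 1) mod l" and "i \<noteq> (i + 2) mod l" and "(i + 1) mod l \<noteq> (i + 2) mod l"
    by simp_all
qed

lemma cyclic_neighbours_lt_sum:
  fixes x :: "nat \<Rightarrow> real"
  assumes pos: "\<And>k. k < l \<Longrightarrow> 0 < x k" and "3 \<le> l" and "i < l"
  shows "x i + x ((i + 1) mod l) < (\<Sum>k<l. x k)"
proof -
  let ?a = "(i + 1) mod l" and ?b = "(i + 2) mod l"
  have in_range: "?a < l" "?b < l"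
    using \<open>3 \<le> l\<close> by auto
  have "x i + x ?a + x ?b = (\<Sum>k\<in>{i, ?a, ?b}. x k)"
    using cyclic_successors_distinct[OF \<open>3 \<le> l\<close> \<open>i < l\<close>] by simp
  also have "\<dots> \<le> (\<Sum>k<l. x k)"
    by (rule sum_mono2) (use \<open>i < l\<close> in_range pos in \<open>auto intro: less_imp_le\<close>)
  finally show ?thesis
    using pos[OF in_range(2)] by simp
qed

lemma ratio_strict_bounds:
  fixes a b S :: real
  assumes "0 < a" and "0 < b" and "a + b < S"
  shows "a / S < a / (a + b)" and "a / (a + b) < 1 - b / S"
proof -
  show "a / S < a / (a + b)"
    using assms by (intro divide_strict_left_mono) auto
  have "b / S < b / (a + b)"
    using assms by (intro divide_strict_left_mono) auto
  moreover have "a / (a + b) = 1 - b / (a + b)"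
    using assms by (simp add: field_simps)
  ultimately show "a / (a + b) < 1 - b / S"
    by simp
qed

lemma cyclic_ratio_sum_bounds:
  fixes x :: "nat \<Rightarrow> real"
  assumes pos: "\<And>k. k < l \<Longrightarrow> 0 < x k" and "3 \<le> l"
  shows "1 < (\<Sum>i<l. x i / (x i + x ((i + 1) mod l)))"
    and "(\<Sum>i<l. x i / (x i + x ((i + 1) mod l))) < real l - 1"
proof -
  define S where "S = (\<Sum>k<l. x k)"
  have "0 < S"
    unfolding S_def using pos \<open>3 \<le> l\<close> by (intro sum_pos) (auto simp: lessThan_empty_iff)
  have bounds: "x i / S < x i / (x i + x ((i + 1) mod l))"
    "x i / (x i + x ((i + 1) mod l)) < 1 - x ((i + 1) mod l) / S" if "i < l" for i
    using ratio_strict_bounds[OF pos[OF that] pos[of "(i + 1) mod l"]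
        cyclic_neighbours_lt_sum[of l x, OF pos \<open>3 \<le> l\<close> that]]
      \<open>3 \<le> l\<close> unfolding S_def by auto
  have lower_total: "(\<Sum>i<l. x i / S) = 1"
    using \<open>0 < S\<close> unfolding S_def by (simp add: sum_divide_distrib[symmetric])
  moreover have "(\<Sum>i<l. x ((i + 1) mod l) / S) = (\<Sum>i<l. x i / S)"
    by (rule sum_lessThan_rotate)
  ultimately have upper_total: "(\<Sum>i<l. 1 - x ((i + 1) mod l) / S) = real l - 1"
    by (simp add: sum_subtractf)
  have "l \<noteq> 0"
    using \<open>3 \<le> l\<close> by simp
  show "1 < (\<Sum>i<l. x i / (x i + x ((i + 1) mod l)))"
    unfolding lower_total[symmetric] using \<open>l \<noteq> 0\<close> bounds(1) by (intro sum_strict_mono) auto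
  show "(\<Sum>i<l. x i / (x i + x ((i + 1) mod l))) < real l - 1"
    unfolding upper_total[symmetric] using \<open>l \<noteq> 0\<close> bounds(2) by (intro sum_strict_mono) auto
qed

lemma curl_eq_cyclic_sum:
  assumes "c \<noteq> []"
  shows "curl p c = (\<Sum>i<length c. opinion p (c ! i) (c ! ((i + 1) mod length c)))"
proof -
  obtain m where m: "length c = Suc m"
    using assms by (cases c) auto
  have "(\<Sum>i<Suc m. opinion p (c ! i) (c ! ((i + 1) mod Suc m)))
      = (\<Sum>i<m. opinion p (c ! i) (c ! ((i + 1) mod Suc m))) + opinion p (c ! m) (c ! 0)"
    by simp
  also have "(\<Sum>i<m. opinion p (c ! i) (c ! ((i + 1) mod Suc m)))
      = (\<Sum>i<m. opinion p (c ! i) (c ! (i + 1)))"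
    by (rule sum.cong) auto
  finally show ?thesis
    unfolding curl_def m by simp
qed

theorem lemma1:
  fixes n :: nat and p :: "nat \<Rightarrow> real" and c :: "nat list"
  assumes "\<forall>i\<in>{1..n}. 0 < p i \<and> p i < 1"
    and "(\<Sum>i=1..n. p i) = 1"
    and "length c \<ge> 3"
    and "distinct c"
    and "set c \<subseteq> {1..n}"
  shows "1 < curl p c \<and> curl p c < real (length c) - 1"
proof -
  let ?x = "\<lambda>i. p (c ! i)"
  have pos: "0 < ?x k" if "k < length c" for k
    using assms(1,5) that by (meson nth_mem subsetD)
  have "curl p c = (\<Sum>i<length c. ?x i / (?x i + ?x ((i + 1) mod length c)))"
    using assms(3) by (simp add: curl_eq_cyclic_sum[of c] opinion_def flip: length_greater_0_conv)
  then show ?thesis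
    using cyclic_ratio_sum_bounds[of "length c" ?x, OF pos assms(3)] by simp
qed

end
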